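(* Let $(\mathcal X,\mathcal B,\pi)$ be a measure space with $\pi$ $\sigma$-finite, $r$ measurable, and the noise stationary: $\{\varepsilon(x)\}$ a real-valued random field with $\varepsilon(x)\overset d=\varepsilon$ for all $x$ for some random variable $\varepsilon$, with i.i.d. copies independent of sampled points. Let $2\le K<\infty$. Assume: (a) $p_0$ (and a reference density $p_{\rm ref}$) in $\mathcal P_\pi$ satisfy $\int p|\log p|\,d\pi<\infty$; (b) $\mathbb E_{X\sim p}[e^{|r(X)+\varepsilon(X)|}]<\infty$ for all $p\in\mathcal P_\pi$; (c) $0<Q_*<\infty$, $Q\le Q_*$ everywhere; (d) $\int_Ap_0\,d\pi>0$ where $A=\{Q=Q_*\}$. Let $p_{t+1}=p_tH^K_{p_t}$. Then for all $t$, $\mathbb E_{X\sim p_{t+1}}Q(X)\ge\mathbb E_{X\sim p_t}Q(X)$, and $\lim_{t\to\infty}\mathbb E_{X\sim p_t}Q(X)=Q_*$.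
   Context: $\mathcal P_\pi$ = probability densities w.r.t. $\pi$. $Q(x):=e^{r(x)}\mathbb E[e^{\varepsilon(x)}]$, $Q_*:=\operatorname*{ess\,sup}_\pi Q$. $H^K_p(x):=\mathbb E\bigl[K e^{r(x)+\varepsilon(x)}/(e^{r(x)+\varepsilon(x)}+\sum_{k=1}^{K-1}e^{r(X_k)+\varepsilon_k(X_k)})\bigr]$ with $X_k$ i.i.d. with density $p$, independent of the i.i.d. noise copies. *)

theory Defs
  imports "HOL-Probability.Probability"
begin

definition is_density :: "'a measure \<Rightarrow> ('a \<Rightarrow> real) \<Rightarrow> bool" where
  "is_density M p \<longleftrightarrow> p \<in> borel_measurable M \<and> (\<forall>x\<in>space M. 0 \<le> p x)
     \<and> (\<integral>\<^sup>+ x. ennreal (p x) \<partial>M) = 1"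

text \<open>Q(x) = e^{r(x)} E[e^eps], N the (common) law of the stationary noise.\<close>
definition Qfun :: "real measure \<Rightarrow> ('a \<Rightarrow> real) \<Rightarrow> 'a \<Rightarrow> real" where
  "Qfun N r x = exp (r x) * (\<integral> e. exp e \<partial>N)"

definition Qstar :: "'a measure \<Rightarrow> real measure \<Rightarrow> ('a \<Rightarrow> real) \<Rightarrow> ereal" where
  "Qstar M N r = esssup M (\<lambda>x. ereal (Qfun N r x))"

text \<open>H^K_p(x): expectation over the own noise e0 ~ N and K-1 i.i.d. pairs (X_k, eps_k)
  with X_k ~ p dM and eps_k ~ N independent.\<close>
definition HK :: "'a measure \<Rightarrow> real measure \<Rightarrow> ('a \<Rightarrow> real) \<Rightarrow> nat \<Rightarrow> ('a \<Rightarrow> real) \<Rightarrow> 'a \<Rightarrow> real" where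
  "HK M N r K p x =
     (\<integral> z. real K * exp (r x + fst z) /
            (exp (r x + fst z) + (\<Sum>k<K - 1. exp (r (fst (snd z k)) + snd (snd z k))))
      \<partial>(N \<Otimes>\<^sub>M (\<Pi>\<^sub>M k\<in>{..<K - 1}. (density M (\<lambda>y. ennreal (p y)) \<Otimes>\<^sub>M N))))"

fun piter :: "'a measure \<Rightarrow> real measure \<Rightarrow> ('a \<Rightarrow> real) \<Rightarrow> nat \<Rightarrow> ('a \<Rightarrow> real) \<Rightarrow> nat \<Rightarrow> 'a \<Rightarrow> real" where
  "piter M N r K p0 0 = p0"
| "piter M N r K p0 (Suc t) = (\<lambda>x. piter M N r K p0 t x * HK M N r K (piter M N r K p0 t) x)"

end

theory Submission
  imports Defs
begin

text \<open>
  Since Q \<le> Q_* everywhere and the set A where Q = Q_* is nonempty, Q_* is attained: Q = c exp r,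
  r \<le> R, with equality exactly on A. One round multiplies the density by H(x) = \<phi>(exp (r x)) for an
  increasing \<phi>. Exchangeability of the K i.i.d. contestants gives \<integral> p H = 1, hence \<phi>(exp R) \<ge> 1 and the
  mass of A never decreases. The gain of E[exp r] in one round is the covariance of the two increasing
  functions exp r and H of r, hence nonnegative, and the contribution of A bounds it below by
  d (exp R - E[exp r])^2, where d > 0 depends only on the initial mass of A. A bounded sequence with such
  quadratic gains converges to its bound.
\<close>

definition share :: "real \<Rightarrow> real \<Rightarrow> real" where
  "share w s = w / (w + s)"

lemma borel_measurable_share [measurable (raw)]:
  "f \<in> borel_measurable M \<Longrightarrow> g \<in> borel_measurable M \<Longrightarrow> (\<lambda>x. share (f x) (g x)) \<in> borel_measurable M"
  unfolding share_def by (intro borel_measurable_divide borel_measurable_add)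

lemma share_nonneg: "0 \<le> w \<Longrightarrow> 0 \<le> s \<Longrightarrow> 0 \<le> share w s"
  by (simp add: share_def)

lemma share_le_1: "0 \<le> w \<Longrightarrow> 0 \<le> s \<Longrightarrow> share w s \<le> 1"
  unfolding share_def by (cases "w + s = 0") (auto simp: divide_le_eq_1)

lemma share_mono:
  assumes "0 \<le> w" "w \<le> w'" "0 \<le> s"
  shows "share w s \<le> share w' s"
proof (cases "w = 0")
  case True
  then show ?thesis
    using assms by (simp add: share_nonneg share_def)
next
  case False
  then have "0 < w + s" "0 < w' + s"
    using assms by linarith+
  moreover have "w * (w' + s) \<le> w' * (w + s)"
    using mult_right_mono[OF assms(2,3)] by (simp add: algebra_simps)
  ultimately show ?thesis
    by (simp add: share_def divide_le_eq le_divide_eq mult.commute)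
qed

lemma share_diff_lower_bound:
  fixes a b u u0 s s0 D :: real
  assumes "0 \<le> a" "a \<le> b" "0 < u0" "u0 \<le> u" "0 < s0" "s0 \<le> s" "b * u + s \<le> D"
  shows "(b - a) * u0 * s0 / D\<^sup>2 \<le> share (b * u) s - share (a * u) s"
proof -
  have pos: "0 < a * u + s" "0 < b * u + s"
    using assms by (auto intro: add_nonneg_pos)
  have "share (b * u) s - share (a * u) s = (b - a) * (u * s) / ((b * u + s) * (a * u + s))"
    using pos by (simp add: share_def field_simps)
  also have "(b - a) * u0 * s0 / D\<^sup>2 \<le> \<dots>"
  proof (rule frac_le)
    show "(b - a) * u0 * s0 \<le> (b - a) * (u * s)"
      using assms by (simp add: mult.assoc mult_left_mono mult_mono)
    have "a * u + s \<le> b * u + s"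
      using assms by (simp add: mult_right_mono)
    then have "a * u + s \<le> D"
      using assms by linarith
    then show "(b * u + s) * (a * u + s) \<le> D\<^sup>2"
      unfolding power2_eq_square using assms pos by (intro mult_mono) auto
  qed (use assms pos in auto)
  finally show ?thesis .
qed

lemma share_gap_exp:
  fixes a c e R s :: real
  assumes "1 \<le> n" "0 \<le> a" "a \<le> exp R" "-c \<le> e" "e \<le> c"
    and "real n * exp (R - c) \<le> s" "s \<le> real n * exp (R + c)"
  shows "real n / real (Suc n) * exp (- (R + 4 * c)) * (exp R - a)
    \<le> real (Suc n) * (share (exp R * exp e) s - share (a * exp e) s)"
proof -
  let ?C = "real n / real (Suc n) * exp (- (R + 4 * c)) * (exp R - a)"
  have "exp R * exp e \<le> exp (R + c)"
    using assms by (simp flip: exp_add)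
  then have "exp R * exp e + s \<le> real (Suc n) * exp (R + c)"
    using assms by (simp add: algebra_simps)
  then have "(exp R - a) * exp (- c) * (real n * exp (R - c)) / (real (Suc n) * exp (R + c))\<^sup>2
      \<le> share (exp R * exp e) s - share (a * exp e) s"
    using assms by (intro share_diff_lower_bound) auto
  moreover have "(exp R - a) * exp (- c) * (real n * exp (R - c)) / (real (Suc n) * exp (R + c))\<^sup>2
      = ?C / real (Suc n)"
  proof -
    have exp_eq: "exp (- c) * exp (R - c) = exp (- (R + 4 * c)) * (exp (R + c))\<^sup>2"
      by (simp add: power2_eq_square mult_exp_exp algebra_simps)
    have "(exp R - a) * exp (- c) * (real n * exp (R - c)) / (real (Suc n) * exp (R + c))\<^sup>2
        = (exp R - a) * real n * (exp (- c) * exp (R - c)) / ((real (Suc n))\<^sup>2 * (exp (R + c))\<^sup>2)"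
      by (simp only: power_mult_distrib mult_ac)
    also have "\<dots> = ?C / real (Suc n)"
      unfolding exp_eq by (simp add: power2_eq_square)
    finally show ?thesis .
  qed
  ultimately have "?C / real (Suc n) \<le> share (exp R * exp e) s - share (a * exp e) s"
    by simp
  then have "real (Suc n) * (?C / real (Suc n)) \<le> real (Suc n) * (share (exp R * exp e) s - share (a * exp e) s)"
    by (rule mult_left_mono) simp
  then show ?thesis
    by simp
qed

lemma LIMSEQ_of_quadratic_gain:
  fixes \<mu> :: "nat \<Rightarrow> real"
  assumes bound: "\<And>t. \<mu> t \<le> B" and gain: "\<And>t. \<mu> t + d * (B - \<mu> t)\<^sup>2 \<le> \<mu> (Suc t)" and "0 < d"
  shows "incseq \<mu>" and "\<mu> \<longlonglongrightarrow> B"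
proof -
  show "incseq \<mu>"
    using gain \<open>0 < d\<close> by (intro incseq_SucI) (smt (verit) zero_le_power2 mult_nonneg_nonneg)
  then obtain L where L: "\<mu> \<longlonglongrightarrow> L"
    using bound incseq_convergent by blast
  have "(\<lambda>t. \<mu> t + d * (B - \<mu> t)\<^sup>2) \<longlonglongrightarrow> L + d * (B - L)\<^sup>2"
    by (intro tendsto_intros L)
  then have "L + d * (B - L)\<^sup>2 \<le> L"
    using LIMSEQ_Suc[OF L] gain by (intro LIMSEQ_le) auto
  then have "L = B"
    using \<open>0 < d\<close> by (simp add: mult_le_0_iff)
  then show "\<mu> \<longlonglongrightarrow> B"
    using L by simp
qed

lemma exists_interval_measure_pos:
  fixes M :: "real measure"
  assumes "prob_space M" "sets M = sets borel"
  obtains c where "0 \<le> c" "0 < measure M {-c..c}"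
proof -
  interpret prob_space M by fact
  have "range (\<lambda>k. {-real k..real k}) \<subseteq> sets M"
    using assms(2) by (simp add: image_subset_iff)
  moreover have "incseq (\<lambda>k. {-real k..real k})"
    unfolding incseq_def by auto
  ultimately have "(\<lambda>k. measure M {-real k..real k}) \<longlonglongrightarrow> measure M (\<Union>k. {-real k..real k})"
    by (rule finite_Lim_measure_incseq[of "\<lambda>k. {-real k..real k}"])
  moreover have "(\<Union>k. {-real k..real k}) = space M"
  proof -
    have "x \<in> (\<Union>k. {-real k..real k})" for x
    proof -
      obtain k where "\<bar>x\<bar> \<le> real k"
        using real_arch_simple by blast
      then show ?thesis
        by (intro UN_I[of k]) (auto simp: abs_le_iff)
    qed
    then show ?thesis
      using sets_eq_imp_space_eq[OF assms(2)] by auto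
  qed
  ultimately have "(\<lambda>k. measure M {-real k..real k}) \<longlonglongrightarrow> 1"
    using prob_space by simp
  then have "eventually (\<lambda>k. 0 < measure M {-real k..real k}) sequentially"
    by (rule order_tendstoD) simp
  then obtain k where "0 < measure M {-real k..real k}"
    using eventually_sequentially by auto
  then show thesis
    using that[of "real k"] by simp
qed

lemma centered_product_expand:
  fixes f g :: "'a \<Rightarrow> real"
  shows "(\<lambda>x. (f x - a) * (g x - b)) = (\<lambda>x. f x * g x - a * g x - b * f x + a * b)"
  by (simp add: fun_eq_iff algebra_simps)

lemma (in prob_space) integrable_mult_centered:
  fixes f g :: "'a \<Rightarrow> real"
  assumes "integrable M f" "integrable M g" "integrable M (\<lambda>x. f x * g x)"
  shows "integrable M (\<lambda>x. (f x - a) * (g x - b))"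
  unfolding centered_product_expand using assms by simp

lemma (in prob_space) integral_mult_centered:
  fixes f g :: "'a \<Rightarrow> real"
  assumes "integrable M f" "integrable M g" "integrable M (\<lambda>x. f x * g x)" "expectation g = 1"
  shows "expectation (\<lambda>x. (f x - expectation f) * (g x - v)) = expectation (\<lambda>x. f x * g x) - expectation f"
  unfolding centered_product_expand using assms by (simp add: prob_space)

lemma integral_weight_ratio_PiM_swap:
  fixes L :: "'b measure" and w :: "'b \<Rightarrow> real"
  assumes L: "prob_space L" and w[measurable]: "w \<in> borel_measurable L" and ij: "i \<in> I" "j \<in> I"
  shows "(\<integral>\<omega>. w (\<omega> j) / (\<Sum>k\<in>I. w (\<omega> k)) \<partial>PiM I (\<lambda>_. L))
       = (\<integral>\<omega>. w (\<omega> i) / (\<Sum>k\<in>I. w (\<omega> k)) \<partial>PiM I (\<lambda>_. L))"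
proof -
  let ?\<tau> = "Transposition.transpose i j"
  let ?swap = "\<lambda>\<omega>. \<lambda>k\<in>I. \<omega> (?\<tau> k)"
  have "bij_betw ?\<tau> I I"
    using ij by (simp add: bij_betw_transpose_iff)
  then have \<tau>: "inj_on ?\<tau> I" "?\<tau> \<in> I \<rightarrow> I" "bij_betw ?\<tau> I I"
    by (auto simp: bij_betw_def)
  have distr: "distr (PiM I (\<lambda>_. L)) (PiM I (\<lambda>_. L)) ?swap = PiM I (\<lambda>_. L)"
    using distr_PiM_reindex[of I "\<lambda>_. L", OF L \<tau>(1,2)] by simp
  have swap: "?swap \<in> PiM I (\<lambda>_. L) \<rightarrow>\<^sub>M PiM I (\<lambda>_. L)"
    using \<tau>(2) by (intro measurable_restrict measurable_component_singleton) auto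
  have ratio: "(\<lambda>\<omega>. w (\<omega> j) / (\<Sum>k\<in>I. w (\<omega> k))) \<in> borel_measurable (PiM I (\<lambda>_. L))"
    using ij by measurable
  have "(\<integral>\<omega>. w (\<omega> j) / (\<Sum>k\<in>I. w (\<omega> k)) \<partial>PiM I (\<lambda>_. L))
      = (\<integral>\<omega>. w (?swap \<omega> j) / (\<Sum>k\<in>I. w (?swap \<omega> k)) \<partial>PiM I (\<lambda>_. L))"
    using integral_distr[OF swap ratio] distr by simp
  also have "\<dots> = (\<integral>\<omega>. w (\<omega> i) / (\<Sum>k\<in>I. w (\<omega> k)) \<partial>PiM I (\<lambda>_. L))"
  proof (rule Bochner_Integration.integral_cong[OF refl])
    fix \<omega>
    have "(\<Sum>k\<in>I. w (?swap \<omega> k)) = (\<Sum>k\<in>I. w (\<omega> k))"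
      using sum.reindex_bij_betw[OF \<tau>(3), of "\<lambda>k. w (\<omega> k)"] by simp
    then show "w (?swap \<omega> j) / (\<Sum>k\<in>I. w (?swap \<omega> k)) = w (\<omega> i) / (\<Sum>k\<in>I. w (\<omega> k))"
      using ij by simp
  qed
  finally show ?thesis .
qed

lemma integral_weight_ratio_PiM:
  fixes L :: "'b measure" and w :: "'b \<Rightarrow> real"
  assumes L: "prob_space L" and w[measurable]: "w \<in> borel_measurable L"
    and pos: "\<And>z. z \<in> space L \<Longrightarrow> 0 < w z" and "finite I" and i: "i \<in> I"
  shows "(\<integral>\<omega>. w (\<omega> i) / (\<Sum>k\<in>I. w (\<omega> k)) \<partial>PiM I (\<lambda>_. L)) = 1 / card I"
proof -
  interpret prob_space "PiM I (\<lambda>_. L)"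
    using L by (simp add: prob_space_PiM)
  have total_pos: "0 < (\<Sum>k\<in>I. w (\<omega> k))" if "\<omega> \<in> space (PiM I (\<lambda>_. L))" for \<omega>
  proof -
    have "w (\<omega> i) \<le> (\<Sum>k\<in>I. w (\<omega> k))"
      using that i \<open>finite I\<close> pos by (intro member_le_sum) (auto simp: space_PiM PiE_iff intro!: less_imp_le)
    moreover have "0 < w (\<omega> i)"
      using that i pos by (auto simp: space_PiM)
    ultimately show ?thesis
      by linarith
  qed
  have integrable: "integrable (PiM I (\<lambda>_. L)) (\<lambda>\<omega>. w (\<omega> j) / (\<Sum>k\<in>I. w (\<omega> k)))" if j: "j \<in> I" for j
  proof (rule integrable_const_bound[where B=1])
    show "AE \<omega> in PiM I (\<lambda>_. L). norm (w (\<omega> j) / (\<Sum>k\<in>I. w (\<omega> k))) \<le> 1"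
    proof (rule AE_I2)
      fix \<omega> assume \<omega>: "\<omega> \<in> space (PiM I (\<lambda>_. L))"
      have "0 \<le> w (\<omega> j)"
        using \<omega> j pos by (auto simp: space_PiM PiE_iff intro!: less_imp_le)
      moreover have "w (\<omega> j) \<le> (\<Sum>k\<in>I. w (\<omega> k))"
        using \<omega> j pos \<open>finite I\<close> by (intro member_le_sum) (auto simp: space_PiM PiE_iff intro!: less_imp_le)
      ultimately show "norm (w (\<omega> j) / (\<Sum>k\<in>I. w (\<omega> k))) \<le> 1"
        using total_pos[OF \<omega>] by simp
    qed
  qed (use j in measurable)
  have "real (card I) * (\<integral>\<omega>. w (\<omega> i) / (\<Sum>k\<in>I. w (\<omega> k)) \<partial>PiM I (\<lambda>_. L))
      = (\<Sum>j\<in>I. \<integral>\<omega>. w (\<omega> j) / (\<Sum>k\<in>I. w (\<omega> k)) \<partial>PiM I (\<lambda>_. L))"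
    using integral_weight_ratio_PiM_swap[OF L w i] by (simp cong: sum.cong)
  also have "\<dots> = (\<integral>\<omega>. (\<Sum>j\<in>I. w (\<omega> j) / (\<Sum>k\<in>I. w (\<omega> k))) \<partial>PiM I (\<lambda>_. L))"
    using integrable by (rule Bochner_Integration.integral_sum[symmetric])
  also have "\<dots> = (\<integral>\<omega>. 1 \<partial>PiM I (\<lambda>_. L))"
    using total_pos by (intro Bochner_Integration.integral_cong) (force simp: sum_divide_distrib[symmetric])+
  also have "\<dots> = 1"
    by (simp add: prob_space)
  finally have "real (card I) * (\<integral>\<omega>. w (\<omega> i) / (\<Sum>k\<in>I. w (\<omega> k)) \<partial>PiM I (\<lambda>_. L)) = 1" .
  moreover have "card I \<noteq> 0"
    using \<open>finite I\<close> i by auto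
  ultimately show ?thesis
    by (simp add: eq_divide_eq mult.commute)
qed

lemma integral_share_iid:
  fixes L :: "'b measure" and w :: "'b \<Rightarrow> real"
  assumes L: "prob_space L" and w[measurable]: "w \<in> borel_measurable L"
    and pos: "\<And>z. z \<in> space L \<Longrightarrow> 0 < w z"
  shows "(\<integral>(z, zs). real (Suc n) * share (w z) (\<Sum>k<n. w (zs k)) \<partial>(L \<Otimes>\<^sub>M PiM {..<n} (\<lambda>_. L))) = 1"
proof -
  let ?insert = "\<lambda>(z, zs). zs(n := z)"
  have distr: "distr (L \<Otimes>\<^sub>M PiM {..<n} (\<lambda>_. L)) (PiM {..<Suc n} (\<lambda>_. L)) ?insert = PiM {..<Suc n} (\<lambda>_. L)"
    using distr_pair_PiM_eq_PiM[of "{..<n}" "\<lambda>_. L" n, OF L L] by (simp add: lessThan_Suc)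
  have insert: "?insert \<in> L \<Otimes>\<^sub>M PiM {..<n} (\<lambda>_. L) \<rightarrow>\<^sub>M PiM {..<Suc n} (\<lambda>_. L)"
    using measurable_fun_upd[of "{..<Suc n}" "{..<n}" n snd _ "\<lambda>_. L" fst]
    by (simp add: lessThan_Suc case_prod_beta')
  have ratio: "(\<lambda>\<omega>. w (\<omega> n) / (\<Sum>k<Suc n. w (\<omega> k))) \<in> borel_measurable (PiM {..<Suc n} (\<lambda>_. L))"
    by measurable
  have "share (w z) (\<Sum>k<n. w (zs k)) = w (?insert (z, zs) n) / (\<Sum>k<Suc n. w (?insert (z, zs) k))" for z zs
  proof -
    have "(\<Sum>k<n. w ((zs(n := z)) k)) = (\<Sum>k<n. w (zs k))"
      by (rule sum.cong) auto
    then show ?thesis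
      by (simp add: share_def add.commute)
  qed
  then have "(\<integral>(z, zs). real (Suc n) * share (w z) (\<Sum>k<n. w (zs k)) \<partial>(L \<Otimes>\<^sub>M PiM {..<n} (\<lambda>_. L)))
      = (\<integral>y. real (Suc n) * (w (?insert y n) / (\<Sum>k<Suc n. w (?insert y k))) \<partial>(L \<Otimes>\<^sub>M PiM {..<n} (\<lambda>_. L)))"
    by (intro Bochner_Integration.integral_cong) auto
  also have "\<dots> = real (Suc n) * (\<integral>y. w (?insert y n) / (\<Sum>k<Suc n. w (?insert y k)) \<partial>(L \<Otimes>\<^sub>M PiM {..<n} (\<lambda>_. L)))"
    by (rule Bochner_Integration.integral_mult_right_zero)
  also have "\<dots> = real (Suc n) * (\<integral>\<omega>. w (\<omega> n) / (\<Sum>k<Suc n. w (\<omega> k)) \<partial>PiM {..<Suc n} (\<lambda>_. L))"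
    using integral_distr[OF insert ratio] distr by simp
  also have "\<dots> = 1"
    using integral_weight_ratio_PiM[OF L w pos, of "{..<Suc n}" n] by simp
  finally show ?thesis .
qed

locale selection_round = P: prob_space P + N: prob_space N
  for P :: "'a measure" and N :: "real measure" +
  fixes r :: "'a \<Rightarrow> real" and n :: nat
  assumes sets_N: "sets N = sets borel"
    and r_measurable [measurable]: "r \<in> borel_measurable P"
begin

abbreviation rivals :: "(nat \<Rightarrow> 'a \<times> real) measure" where
  "rivals \<equiv> PiM {..<n} (\<lambda>_. P \<Otimes>\<^sub>M N)"

abbreviation weight :: "'a \<times> real \<Rightarrow> real" where
  "weight z \<equiv> exp (r (fst z) + snd z)"

text \<open>If P is the law of the current population, then HK M N r (Suc n) p x = selection_factor (exp (r x)):
  the integration variable e is the noise of x, and zs are its n = K - 1 rivals (point and noise).\<close>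

definition selection_factor :: "real \<Rightarrow> real" where
  "selection_factor a =
     (\<integral>(e, zs). real (Suc n) * share (a * exp e) (\<Sum>k<n. weight (zs k)) \<partial>(N \<Otimes>\<^sub>M rivals))"

lemma ident_measurable_N [measurable]: "(\<lambda>x. x) \<in> borel_measurable N"
  by (simp add: measurable_cong_sets[OF sets_N refl])

lemma prob_space_contestant: "prob_space (P \<Otimes>\<^sub>M N)"
  by (simp add: P.prob_space_axioms N.prob_space_axioms prob_space_pair)

lemma prob_space_rivals: "prob_space rivals"
  using prob_space_contestant by (simp add: prob_space_PiM)

lemma prob_space_N_rivals: "prob_space (N \<Otimes>\<^sub>M rivals)"
  by (simp add: N.prob_space_axioms prob_space_rivals prob_space_pair)

lemma selection_integrand_bounds:
  assumes "0 \<le> a"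
  shows "0 \<le> real (Suc n) * share (a * exp e) (\<Sum>k<n. weight (zs k))"
    and "real (Suc n) * share (a * exp e) (\<Sum>k<n. weight (zs k)) \<le> real (Suc n)"
  using assms share_le_1[of "a * exp e" "\<Sum>k<n. weight (zs k)"]
  by (simp_all add: share_nonneg sum_nonneg)

lemma integrable_selection_integrand:
  assumes "0 \<le> a"
  shows "integrable (N \<Otimes>\<^sub>M rivals) (\<lambda>(e, zs). real (Suc n) * share (a * exp e) (\<Sum>k<n. weight (zs k)))"
proof -
  interpret prob_space "N \<Otimes>\<^sub>M rivals"
    by (rule prob_space_N_rivals)
  show ?thesis
    using selection_integrand_bounds[OF assms]
    by (intro integrable_const_bound[where B="real (Suc n)"] AE_I2) (auto split: prod.split)
qed

lemma selection_factor_bounds: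
  assumes "0 \<le> a"
  shows "0 \<le> selection_factor a" and "selection_factor a \<le> real (Suc n)"
proof -
  interpret prob_space "N \<Otimes>\<^sub>M rivals"
    by (rule prob_space_N_rivals)
  show "0 \<le> selection_factor a"
    unfolding selection_factor_def
    using selection_integrand_bounds(1)[OF assms] by (intro Bochner_Integration.integral_nonneg) (auto split: prod.split)
  show "selection_factor a \<le> real (Suc n)"
    unfolding selection_factor_def using selection_integrand_bounds(2)[OF assms]
    by (intro integral_le_const integrable_selection_integrand[OF assms] AE_I2) (auto split: prod.split)
qed

lemma selection_factor_mono:
  assumes "0 \<le> a" "a \<le> b"
  shows "selection_factor a \<le> selection_factor b"
  unfolding selection_factor_def
proof (rule integral_mono[OF integrable_selection_integrand integrable_selection_integrand])
  fix y :: "real \<times> (nat \<Rightarrow> 'a \<times> real)"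
  show "(case y of (e, zs) \<Rightarrow> real (Suc n) * share (a * exp e) (\<Sum>k<n. weight (zs k)))
      \<le> (case y of (e, zs) \<Rightarrow> real (Suc n) * share (b * exp e) (\<Sum>k<n. weight (zs k)))"
    using assms by (auto split: prod.split intro!: mult_left_mono share_mono sum_nonneg)
qed (use assms in auto)

lemma borel_measurable_selection_factor [measurable]:
  "(\<lambda>x. selection_factor (exp (r x))) \<in> borel_measurable P"
proof -
  interpret prob_space "N \<Otimes>\<^sub>M rivals"
    by (rule prob_space_N_rivals)
  show ?thesis
    unfolding selection_factor_def by measurable
qed

lemma integral_selection_factor: "(\<integral>x. selection_factor (exp (r x)) \<partial>P) = 1"
proof -
  let ?g = "\<lambda>(z, zs). real (Suc n) * share (weight z) (\<Sum>k<n. weight (zs k))"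
  let ?G = "\<lambda>z. \<integral>zs. ?g (z, zs) \<partial>rivals"
  interpret PN: pair_sigma_finite P N
    by (simp add: pair_sigma_finite_def P.sigma_finite_measure_axioms N.sigma_finite_measure_axioms)
  interpret NR: pair_sigma_finite N rivals
    by (simp add: pair_sigma_finite_def N.sigma_finite_measure_axioms prob_space_rivals prob_space_imp_sigma_finite)
  interpret CR: pair_sigma_finite "P \<Otimes>\<^sub>M N" rivals
    by (simp add: pair_sigma_finite_def prob_space_contestant prob_space_rivals prob_space_imp_sigma_finite)
  interpret CR: prob_space "(P \<Otimes>\<^sub>M N) \<Otimes>\<^sub>M rivals"
    by (simp add: prob_space_contestant prob_space_rivals prob_space_pair)
  have g_int: "integrable ((P \<Otimes>\<^sub>M N) \<Otimes>\<^sub>M rivals) ?g"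
    using selection_integrand_bounds[of 1]
    by (intro CR.integrable_const_bound[where B="real (Suc n)"] AE_I2) (auto split: prod.split)
  have "selection_factor (exp (r x)) = (\<integral>e. ?G (x, e) \<partial>N)" for x
  proof -
    have "(\<lambda>(e, zs). real (Suc n) * share (exp (r x) * exp e) (\<Sum>k<n. weight (zs k))) = (\<lambda>(e, zs). ?g ((x, e), zs))"
      by (simp add: exp_add)
    then show ?thesis
      using NR.integral_fst'[OF integrable_selection_integrand[of "exp (r x)"]]
      by (simp add: selection_factor_def)
  qed
  then have "(\<integral>x. selection_factor (exp (r x)) \<partial>P) = (\<integral>x. \<integral>e. ?G (x, e) \<partial>N \<partial>P)"
    by simp
  also have "\<dots> = (\<integral>z. ?G z \<partial>(P \<Otimes>\<^sub>M N))"
    by (rule PN.integral_fst'[OF CR.integrable_fst'[OF g_int]])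
  also have "\<dots> = (\<integral>y. ?g y \<partial>((P \<Otimes>\<^sub>M N) \<Otimes>\<^sub>M rivals))"
    by (rule CR.integral_fst'[OF g_int])
  also have "\<dots> = 1"
    by (rule integral_share_iid[OF prob_space_contestant]) auto
  finally show ?thesis .
qed

lemma integrable_selection_factor: "integrable P (\<lambda>x. selection_factor (exp (r x)))"
  using selection_factor_bounds[of "exp (r _)"]
  by (intro P.integrable_const_bound[where B="real (Suc n)"] AE_I2) auto

lemma one_le_selection_factor_max:
  assumes "\<And>x. x \<in> space P \<Longrightarrow> r x \<le> R"
  shows "1 \<le> selection_factor (exp R)"
proof -
  have "1 = (\<integral>x. selection_factor (exp (r x)) \<partial>P)"
    by (simp add: integral_selection_factor)
  also have "\<dots> \<le> selection_factor (exp R)"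
    using assms by (intro P.integral_le_const integrable_selection_factor AE_I2 selection_factor_mono) auto
  finally show ?thesis .
qed

lemma measure_top_set_le:
  assumes "\<And>x. x \<in> space P \<Longrightarrow> r x \<le> R"
  defines "A \<equiv> {x \<in> space P. r x = R}"
  shows "measure P A \<le> (\<integral>x. selection_factor (exp (r x)) * indicator A x \<partial>P)"
proof -
  have A: "A \<in> sets P"
    unfolding A_def by measurable
  have "measure P A = (\<integral>x. indicator A x \<partial>P)"
    using A by (simp add: P.emeasure_eq_measure)
  also have "\<dots> \<le> (\<integral>x. selection_factor (exp (r x)) * indicator A x \<partial>P)"
  proof (rule integral_mono)
    show "integrable P (\<lambda>x. selection_factor (exp (r x)) * indicator A x)"
      using A by (intro integrable_real_mult_indicator integrable_selection_factor)
    fix x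
    show "indicator A x \<le> selection_factor (exp (r x)) * indicator A x"
      using one_le_selection_factor_max[OF assms(1)] by (auto simp: A_def indicator_def)
  qed (use A in \<open>simp add: P.emeasure_eq_measure\<close>)
  finally show ?thesis .
qed

lemma measure_rivals_box:
  assumes A: "A \<in> sets P" and I: "I \<in> sets N"
  shows "I \<times> PiE {..<n} (\<lambda>_. A \<times> I) \<in> sets (N \<Otimes>\<^sub>M rivals)"
    and "measure (N \<Otimes>\<^sub>M rivals) (I \<times> PiE {..<n} (\<lambda>_. A \<times> I)) = measure N I * (measure P A * measure N I) ^ n"
proof -
  interpret R: prob_space rivals
    by (rule prob_space_rivals)
  interpret C: product_sigma_finite "\<lambda>_. P \<Otimes>\<^sub>M N"
    by (simp add: product_sigma_finite_def prob_space_contestant prob_space_imp_sigma_finite)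
  interpret NR: prob_space "N \<Otimes>\<^sub>M rivals"
    by (rule prob_space_N_rivals)
  have AI: "A \<times> I \<in> sets (P \<Otimes>\<^sub>M N)"
    using A I by (rule pair_measureI)
  have box: "PiE {..<n} (\<lambda>_. A \<times> I) \<in> sets rivals"
    using AI by (intro sets_PiM_I_finite) auto
  then show "I \<times> PiE {..<n} (\<lambda>_. A \<times> I) \<in> sets (N \<Otimes>\<^sub>M rivals)"
    using I by (intro pair_measureI)
  have "emeasure (N \<Otimes>\<^sub>M rivals) (I \<times> PiE {..<n} (\<lambda>_. A \<times> I))
      = emeasure N I * (\<Prod>k<n. emeasure (P \<Otimes>\<^sub>M N) (A \<times> I))"
    using AI by (simp add: R.emeasure_pair_measure_Times[OF I box] C.emeasure_PiM)
  also have "\<dots> = ennreal (measure N I * (measure P A * measure N I) ^ n)"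
    using A I
    by (simp add: N.emeasure_pair_measure_Times N.emeasure_eq_measure P.emeasure_eq_measure
        ennreal_mult'[symmetric] ennreal_power)
  finally show "measure (N \<Otimes>\<^sub>M rivals) (I \<times> PiE {..<n} (\<lambda>_. A \<times> I)) = measure N I * (measure P A * measure N I) ^ n"
    by (simp add: NR.emeasure_eq_measure)
qed

text \<open>The gap is collected on the event that the own noise lies in [-c, c] and every rival is a maximiser
  of r with noise in [-c, c]; there the total weight of the rivals lies between n exp (R - c) and
  n exp (R + c).\<close>

lemma selection_factor_gap:
  assumes "1 \<le> n" "0 \<le> c" "0 \<le> a" "a \<le> exp R"
  defines "I \<equiv> {-c..c}" and "A \<equiv> {x \<in> space P. r x = R}"
  shows "real n / real (Suc n) * exp (- (R + 4 * c)) * (exp R - a) * (measure N I * (measure P A * measure N I) ^ n)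
    \<le> selection_factor (exp R) - selection_factor a"
proof -
  let ?C = "real n / real (Suc n) * exp (- (R + 4 * c)) * (exp R - a)"
  let ?f = "\<lambda>b (e, zs). real (Suc n) * share (b * exp e) (\<Sum>k<n. weight (zs k))"
  define E where "E = I \<times> PiE {..<n} (\<lambda>_. A \<times> I)"
  have A: "A \<in> sets P"
    unfolding A_def by measurable
  have I: "I \<in> sets N"
    unfolding I_def using sets_N by simp
  note E = measure_rivals_box[OF A I, folded E_def]
  have pointwise: "?C * indicator E y \<le> ?f (exp R) y - ?f a y" for y
  proof (cases "y \<in> E")
    case True
    obtain e zs where y: "y = (e, zs)"
      by (cases y)
    have e: "-c \<le> e" "e \<le> c"
      using True y by (auto simp: E_def I_def)
    have zs: "r (fst (zs k)) = R \<and> -c \<le> snd (zs k) \<and> snd (zs k) \<le> c" if "k < n" for k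
      using True y that by (auto simp: E_def I_def A_def PiE_iff mem_Times_iff)
    let ?s = "\<Sum>k<n. weight (zs k)"
    have "(\<Sum>k<n. exp (R - c)) \<le> ?s" "?s \<le> (\<Sum>k<n. exp (R + c))"
      by (rule sum_mono, use zs in force)+
    then have "?C \<le> real (Suc n) * (share (exp R * exp e) ?s - share (a * exp e) ?s)"
      using assms e by (intro share_gap_exp) auto
    then show ?thesis
      using True y by (simp add: right_diff_distrib)
  next
    case False
    then show ?thesis
      using assms by (auto split: prod.split intro!: mult_left_mono share_mono sum_nonneg)
  qed
  interpret NR: prob_space "N \<Otimes>\<^sub>M rivals"
    by (rule prob_space_N_rivals)
  have "?C * (measure N I * (measure P A * measure N I) ^ n) = (\<integral>y. ?C * indicator E y \<partial>(N \<Otimes>\<^sub>M rivals))"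
    using E by (simp add: NR.emeasure_eq_measure)
  also have "\<dots> \<le> (\<integral>y. ?f (exp R) y - ?f a y \<partial>(N \<Otimes>\<^sub>M rivals))"
    using E(1) assms pointwise
    by (intro integral_mono Bochner_Integration.integrable_diff integrable_selection_integrand integrable_real_mult_indicator) auto
  also have "\<dots> = selection_factor (exp R) - selection_factor a"
    unfolding selection_factor_def using assms
    by (intro Bochner_Integration.integral_diff integrable_selection_integrand) auto
  finally show ?thesis .
qed

lemma centered_selection_lower_bound:
  assumes "1 \<le> n" "0 \<le> c" "0 \<le> a" "a \<le> exp R"
  defines "A \<equiv> {x \<in> space P. r x = R}"
    and "C \<equiv> real n / real (Suc n) * exp (- (R + 4 * c))
      * (measure N {-c..c} * (measure P {x \<in> space P. r x = R} * measure N {-c..c}) ^ n)"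
  shows "C * (exp R - a)\<^sup>2 * indicator A x \<le> (exp (r x) - a) * (selection_factor (exp (r x)) - selection_factor a)"
proof (cases "x \<in> A")
  case True
  then have "r x = R"
    by (simp add: A_def)
  moreover have "C * (exp R - a) \<le> selection_factor (exp R) - selection_factor a"
    using selection_factor_gap[OF assms(1-4)] by (simp add: C_def A_def mult_ac)
  ultimately have "(exp R - a) * (C * (exp R - a))
      \<le> (exp (r x) - a) * (selection_factor (exp (r x)) - selection_factor a)"
    using assms(4) by (simp add: mult_left_mono)
  then show ?thesis
    using True by (simp add: power2_eq_square mult_ac)
next
  case False
  have "0 \<le> (exp (r x) - a) * (selection_factor (exp (r x)) - selection_factor a)"
  proof (cases "a \<le> exp (r x)")
    case True
    then show ?thesis
      using selection_factor_mono[OF assms(3) True] by simp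
  next
    case False
    then show ?thesis
      using selection_factor_mono[of "exp (r x)" a] by (simp add: mult_nonpos_nonpos)
  qed
  then show ?thesis
    using False by simp
qed

lemma mean_exp_gain:
  assumes "1 \<le> n" "0 \<le> c" and r_le: "\<And>x. x \<in> space P \<Longrightarrow> r x \<le> R"
  defines "\<nu> \<equiv> \<integral>x. exp (r x) \<partial>P" and "m \<equiv> measure P {x \<in> space P. r x = R}"
    and "q \<equiv> measure N {-c..c}"
  shows "\<nu> + real n / real (Suc n) * exp (- (R + 4 * c)) * (q * (m * q) ^ n) * m * (exp R - \<nu>)\<^sup>2
    \<le> (\<integral>x. exp (r x) * selection_factor (exp (r x)) \<partial>P)"
proof -
  let ?H = "\<lambda>x. selection_factor (exp (r x))"
  define A where "A = {x \<in> space P. r x = R}"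
  define C where "C = real n / real (Suc n) * exp (- (R + 4 * c)) * (q * (m * q) ^ n)"
  have A: "A \<in> sets P"
    unfolding A_def by measurable
  have exp_int: "integrable P (\<lambda>x. exp (r x))"
    using r_le by (intro P.integrable_const_bound[where B="exp R"] AE_I2) auto
  have prod_int: "integrable P (\<lambda>x. exp (r x) * ?H x)"
    using r_le selection_factor_bounds[of "exp (r _)"]
    by (intro P.integrable_const_bound[where B="exp R * real (Suc n)"] AE_I2)
       (auto simp: abs_mult intro!: mult_mono)
  have \<nu>: "0 \<le> \<nu>" "\<nu> \<le> exp R"
    unfolding \<nu>_def using r_le
    by (auto intro!: Bochner_Integration.integral_nonneg P.integral_le_const exp_int AE_I2)
  have "C * (exp R - \<nu>)\<^sup>2 * m = (\<integral>x. C * (exp R - \<nu>)\<^sup>2 * indicator A x \<partial>P)"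
    using A by (simp add: m_def A_def P.emeasure_eq_measure)
  also have "\<dots> \<le> (\<integral>x. (exp (r x) - \<nu>) * (?H x - selection_factor \<nu>) \<partial>P)"
    using A centered_selection_lower_bound[OF assms(1,2) \<nu>]
    by (intro integral_mono P.integrable_mult_centered exp_int integrable_selection_factor prod_int)
       (auto simp: P.emeasure_eq_measure C_def A_def m_def q_def)
  also have "\<dots> = (\<integral>x. exp (r x) * ?H x \<partial>P) - \<nu>"
    unfolding \<nu>_def
    by (rule P.integral_mult_centered[OF exp_int integrable_selection_factor prod_int integral_selection_factor])
  finally show ?thesis
    by (simp add: C_def algebra_simps)
qed

end

lemma prob_space_density_is_density:
  assumes "is_density M p"
  shows "prob_space (density M (\<lambda>x. ennreal (p x)))"
proof (rule prob_spaceI)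
  have "p \<in> borel_measurable M"
    using assms by (simp add: is_density_def)
  then have "emeasure (density M (\<lambda>x. ennreal (p x))) (space M) = (\<integral>\<^sup>+ x. ennreal (p x) \<partial>M)"
    by (auto simp: emeasure_density intro!: nn_integral_cong)
  then show "emeasure (density M (\<lambda>x. ennreal (p x))) (space (density M (\<lambda>x. ennreal (p x)))) = 1"
    using assms by (simp add: is_density_def)
qed

lemma measure_density_is_density:
  assumes "is_density M p" "A \<in> sets M"
  shows "measure (density M (\<lambda>x. ennreal (p x))) A = (\<integral>x. p x * indicator A x \<partial>M)"
proof -
  interpret prob_space "density M (\<lambda>x. ennreal (p x))"
    using assms(1) by (rule prob_space_density_is_density)
  have "measure (density M (\<lambda>x. ennreal (p x))) A = (\<integral>x. indicator A x \<partial>density M (\<lambda>x. ennreal (p x)))"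
    using assms(2) by (simp add: emeasure_eq_measure)
  also have "\<dots> = (\<integral>x. p x * indicator A x \<partial>M)"
    using assms by (subst integral_density) (auto simp: is_density_def)
  finally show ?thesis .
qed

lemma measure_density_pos:
  assumes "is_density M p" "A \<in> sets M" "0 < (\<integral>\<^sup>+ x \<in> A. ennreal (p x) \<partial>M)"
  shows "0 < measure (density M (\<lambda>x. ennreal (p x))) A"
proof -
  interpret prob_space "density M (\<lambda>x. ennreal (p x))"
    using assms(1) by (rule prob_space_density_is_density)
  have "emeasure (density M (\<lambda>x. ennreal (p x))) A = (\<integral>\<^sup>+ x \<in> A. ennreal (p x) \<partial>M)"
    using assms(1,2) by (subst emeasure_density) (auto simp: is_density_def mult.commute)
  then have "0 < ennreal (measure (density M (\<lambda>x. ennreal (p x))) A)"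
    using assms(3) by (simp add: emeasure_eq_measure)
  then show ?thesis
    by simp
qed

locale selection_density =
  fixes M :: "'a measure" and N :: "real measure" and r :: "'a \<Rightarrow> real" and n :: nat
    and q :: "'a \<Rightarrow> real"
  assumes q_density: "is_density M q"
    and r_borel [measurable]: "r \<in> borel_measurable M"
    and N_prob: "prob_space N" and N_sets: "sets N = sets borel"

sublocale selection_density \<subseteq> selection_round "density M (\<lambda>x. ennreal (q x))" N r n
  using prob_space_density_is_density[OF q_density] N_prob N_sets
  by (simp add: selection_round_def selection_round_axioms_def)

context selection_density
begin

lemma q_measurable [measurable]: "q \<in> borel_measurable M"
  using q_density by (simp add: is_density_def)

lemma q_nonneg: "x \<in> space M \<Longrightarrow> 0 \<le> q x"
  using q_density by (simp add: is_density_def)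

lemma HK_eq_selection_factor: "HK M N r (Suc n) q x = selection_factor (exp (r x))"
  unfolding HK_def selection_factor_def
  by (intro Bochner_Integration.integral_cong) (auto simp: share_def exp_add)

lemma HK_measurable [measurable]: "(\<lambda>x. HK M N r (Suc n) q x) \<in> borel_measurable M"
  using borel_measurable_selection_factor
  by (simp add: HK_eq_selection_factor measurable_cong_sets[OF sets_density refl])

lemma integral_HK:
  assumes "f \<in> borel_measurable M"
  shows "(\<integral>x. q x * HK M N r (Suc n) q x * f x \<partial>M)
       = (\<integral>x. selection_factor (exp (r x)) * f x \<partial>density M (\<lambda>x. ennreal (q x)))"
  using assms q_nonneg
  by (subst integral_density) (auto simp: HK_eq_selection_factor mult.assoc intro!: Bochner_Integration.integral_cong)

lemma is_density_HK: "is_density M (\<lambda>x. q x * HK M N r (Suc n) q x)"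
  unfolding is_density_def
proof (intro conjI ballI)
  show "(\<lambda>x. q x * HK M N r (Suc n) q x) \<in> borel_measurable M"
    by measurable
  show "0 \<le> q x * HK M N r (Suc n) q x" if "x \<in> space M" for x
    using q_nonneg[OF that] selection_factor_bounds(1)[of "exp (r x)"] by (simp add: HK_eq_selection_factor)
  have "(\<integral>\<^sup>+ x. ennreal (q x * HK M N r (Suc n) q x) \<partial>M)
      = (\<integral>\<^sup>+ x. ennreal (selection_factor (exp (r x))) \<partial>density M (\<lambda>x. ennreal (q x)))"
    using q_nonneg selection_factor_bounds(1)
    by (subst nn_integral_density) (auto simp: HK_eq_selection_factor ennreal_mult intro!: nn_integral_cong)
  also have "\<dots> = ennreal (\<integral>x. selection_factor (exp (r x)) \<partial>density M (\<lambda>x. ennreal (q x)))"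
    using selection_factor_bounds(1) by (intro nn_integral_eq_integral integrable_selection_factor) auto
  finally show "(\<integral>\<^sup>+ x. ennreal (q x * HK M N r (Suc n) q x) \<partial>M) = 1"
    by (simp add: integral_selection_factor)
qed

lemma measure_top_set_HK:
  assumes "\<And>x. x \<in> space M \<Longrightarrow> r x \<le> R"
  defines "A \<equiv> {x \<in> space M. r x = R}"
  shows "measure (density M q) A \<le> measure (density M (\<lambda>x. q x * HK M N r (Suc n) q x)) A"
proof -
  have A: "A \<in> sets M"
    unfolding A_def by measurable
  have "measure (density M q) A \<le> (\<integral>x. selection_factor (exp (r x)) * indicator A x \<partial>density M q)"
    using measure_top_set_le[of R] assms by (simp add: A_def)
  also have "\<dots> = (\<integral>x. q x * HK M N r (Suc n) q x * indicator A x \<partial>M)"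
    using A by (intro integral_HK[symmetric] borel_measurable_indicator)
  also have "\<dots> = measure (density M (\<lambda>x. q x * HK M N r (Suc n) q x)) A"
    by (rule measure_density_is_density[OF is_density_HK A, symmetric])
  finally show ?thesis .
qed

lemma integral_exp_density: "(\<integral>x. q x * exp (r x) \<partial>M) = (\<integral>x. exp (r x) \<partial>density M q)"
  using q_nonneg by (subst integral_density) auto

lemma mean_exp_le_max:
  assumes "\<And>x. x \<in> space M \<Longrightarrow> r x \<le> R"
  shows "(\<integral>x. q x * exp (r x) \<partial>M) \<le> exp R"
proof -
  have "integrable (density M q) (\<lambda>x. exp (r x))"
    using assms by (intro P.integrable_const_bound[where B="exp R"] AE_I2) auto
  then show ?thesis
    using assms by (auto simp: integral_exp_density intro!: P.integral_le_const AE_I2)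
qed

lemma mean_exp_HK_gain:
  assumes "1 \<le> n" "0 \<le> c" "\<And>x. x \<in> space M \<Longrightarrow> r x \<le> R"
  defines "\<nu> \<equiv> \<integral>x. q x * exp (r x) \<partial>M" and "m \<equiv> measure (density M q) {x \<in> space M. r x = R}"
    and "p \<equiv> measure N {-c..c}"
  shows "\<nu> + real n / real (Suc n) * exp (- (R + 4 * c)) * (p * (m * p) ^ n) * m * (exp R - \<nu>)\<^sup>2
    \<le> (\<integral>x. q x * HK M N r (Suc n) q x * exp (r x) \<partial>M)"
proof -
  have "(\<integral>x. q x * HK M N r (Suc n) q x * exp (r x) \<partial>M)
      = (\<integral>x. selection_factor (exp (r x)) * exp (r x) \<partial>density M q)"
    by (rule integral_HK) measurable
  also have "\<dots> = (\<integral>x. exp (r x) * selection_factor (exp (r x)) \<partial>density M q)"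
    by (simp add: mult.commute)
  finally show ?thesis
    using mean_exp_gain[of c R] assms by (simp add: integral_exp_density)
qed

end

lemma piter_density_top_mass:
  assumes p0: "is_density M p0" and r [measurable]: "r \<in> borel_measurable M"
    and N: "prob_space N" "sets N = sets borel" and r_le: "\<And>x. x \<in> space M \<Longrightarrow> r x \<le> R"
  defines "A \<equiv> {x \<in> space M. r x = R}"
  shows "is_density M (piter M N r (Suc n) p0 t)
    \<and> measure (density M p0) A \<le> measure (density M (piter M N r (Suc n) p0 t)) A"
proof (induction t)
  case 0
  show ?case
    using p0 by simp
next
  case (Suc t)
  then interpret selection_density M N r n "piter M N r (Suc n) p0 t"
    using r N by (simp add: selection_density_def)
  show ?case
    using is_density_HK Suc.IH measure_top_set_HK[OF r_le] by (auto simp: A_def)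
qed

lemma piter_mean_exp_quadratic_gain:
  assumes p0: "is_density M p0" and r [measurable]: "r \<in> borel_measurable M"
    and N: "prob_space N" "sets N = sets borel" and n: "1 \<le> n"
    and r_le: "\<And>x. x \<in> space M \<Longrightarrow> r x \<le> R"
    and top: "0 < measure (density M p0) {x \<in> space M. r x = R}"
  defines "\<nu> \<equiv> \<lambda>t. \<integral>x. piter M N r (Suc n) p0 t x * exp (r x) \<partial>M"
  obtains d where "0 < d" "\<And>t. \<nu> t \<le> exp R" "\<And>t. \<nu> t + d * (exp R - \<nu> t)\<^sup>2 \<le> \<nu> (Suc t)"
proof -
  obtain c where c: "0 \<le> c" "0 < measure N {-c..c}"
    using exists_interval_measure_pos[OF N] by blast
  define A where "A = {x \<in> space M. r x = R}"
  define m0 where "m0 = measure (density M p0) A"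
  define pc where "pc = measure N {-c..c}"
  define C where "C = real n / real (Suc n) * exp (- (R + 4 * c))"
  note invariant = piter_density_top_mass[OF p0 r N r_le, of n, folded A_def m0_def]
  show thesis
  proof (rule that)
    show "0 < C * (pc * (m0 * pc) ^ n * m0)"
      using c top n unfolding C_def pc_def m0_def A_def
      by (intro mult_pos_pos divide_pos_pos zero_less_power) auto
    fix t
    interpret selection_density M N r n "piter M N r (Suc n) p0 t"
      using invariant r N by (simp add: selection_density_def)
    show "\<nu> t \<le> exp R"
      unfolding \<nu>_def by (rule mean_exp_le_max[OF r_le])
    let ?m = "measure (density M (piter M N r (Suc n) p0 t)) A"
    have "m0 \<le> ?m" "0 \<le> m0" "0 \<le> pc"
      using invariant by (auto simp: m0_def pc_def)
    then have "pc * (m0 * pc) ^ n * m0 \<le> pc * (?m * pc) ^ n * ?m"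
      by (intro mult_mono mult_left_mono power_mono mult_right_mono) auto
    then have "C * (pc * (m0 * pc) ^ n * m0) * (exp R - \<nu> t)\<^sup>2 \<le> C * (pc * (?m * pc) ^ n * ?m) * (exp R - \<nu> t)\<^sup>2"
      by (intro mult_right_mono mult_left_mono) (auto simp: C_def)
    then show "\<nu> t + C * (pc * (m0 * pc) ^ n * m0) * (exp R - \<nu> t)\<^sup>2 \<le> \<nu> (Suc t)"
      using mean_exp_HK_gain[OF n c(1) r_le] by (simp add: \<nu>_def C_def pc_def A_def mult.assoc)
  qed
qed

lemma Qstar_attained:
  assumes "0 < Qstar M N r" "\<And>x. x \<in> space M \<Longrightarrow> ereal (Qfun N r x) \<le> Qstar M N r"
    and "x0 \<in> space M" "ereal (Qfun N r x0) = Qstar M N r"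
  shows "0 < (\<integral>e. exp e \<partial>N)" and "Qstar M N r = ereal ((\<integral>e. exp e \<partial>N) * exp (r x0))"
    and "\<And>x. x \<in> space M \<Longrightarrow> r x \<le> r x0"
    and "{x \<in> space M. ereal (Qfun N r x) = Qstar M N r} = {x \<in> space M. r x = r x0}"
proof -
  show Qstar: "Qstar M N r = ereal ((\<integral>e. exp e \<partial>N) * exp (r x0))"
    using assms(4) by (simp add: Qfun_def mult.commute)
  then show "0 < (\<integral>e. exp e \<partial>N)"
    using assms(1) by (simp add: zero_less_mult_iff)
  then show "\<And>x. x \<in> space M \<Longrightarrow> r x \<le> r x0"
    and "{x \<in> space M. ereal (Qfun N r x) = Qstar M N r} = {x \<in> space M. r x = r x0}"
    using assms(2) by (auto simp: Qstar Qfun_def mult.commute)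
qed

theorem lemma3:
  fixes M :: "'a measure" and N :: "real measure" and r :: "'a \<Rightarrow> real"
    and K :: nat and p0 pref :: "'a \<Rightarrow> real"
  assumes "sigma_finite_measure M"
    and "r \<in> borel_measurable M"
    and "prob_space N" and "sets N = sets borel"
    and "2 \<le> K"
    and "is_density M p0" and "is_density M pref"
    and "integrable M (\<lambda>x. p0 x * \<bar>ln (p0 x)\<bar>)"
    and "integrable M (\<lambda>x. pref x * \<bar>ln (pref x)\<bar>)"
    and "\<And>p. is_density M p \<Longrightarrow>
           (\<integral>\<^sup>+ z. ennreal (exp \<bar>r (fst z) + snd z\<bar>)
              \<partial>(density M (\<lambda>y. ennreal (p y)) \<Otimes>\<^sub>M N)) < \<infinity>"
    and "0 < Qstar M N r" and "Qstar M N r < \<infinity>"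
    and "\<And>x. x \<in> space M \<Longrightarrow> ereal (Qfun N r x) \<le> Qstar M N r"
    and "(\<integral>\<^sup>+ x \<in> {x \<in> space M. ereal (Qfun N r x) = Qstar M N r}. ennreal (p0 x) \<partial>M) > 0"
  shows "(\<forall>t. (\<integral> x. piter M N r K p0 (Suc t) x * Qfun N r x \<partial>M)
              \<ge> (\<integral> x. piter M N r K p0 t x * Qfun N r x \<partial>M))
       \<and> ((\<lambda>t. ereal (\<integral> x. piter M N r K p0 t x * Qfun N r x \<partial>M)) \<longlonglongrightarrow> Qstar M N r)"
proof -
  \<comment> \<open>Positive p0-mass of the set where Q = Q_* makes Q_* the maximum of Q.\<close>
  define n where "n = K - 1"
  have n: "K = Suc n" "1 \<le> n"
    using \<open>2 \<le> K\<close> by (auto simp: n_def)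
  have "{x \<in> space M. ereal (Qfun N r x) = Qstar M N r} \<noteq> {}"
    using assms(14) by (intro notI) simp
  then obtain x0 where x0: "x0 \<in> space M" "ereal (Qfun N r x0) = Qstar M N r"
    by blast
  note Q = Qstar_attained[OF assms(11,13) x0]
  have "0 < measure (density M p0) {x \<in> space M. r x = r x0}"
    using assms(2,14) by (intro measure_density_pos[OF assms(6)]) (auto simp: Q(4))
  define \<nu> where "\<nu> t = (\<integral>x. piter M N r K p0 t x * exp (r x) \<partial>M)" for t
  obtain d where d: "0 < d" "\<And>t. \<nu> t \<le> exp (r x0)" "\<And>t. \<nu> t + d * (exp (r x0) - \<nu> t)\<^sup>2 \<le> \<nu> (Suc t)"
    using piter_mean_exp_quadratic_gain[OF assms(6,2,3,4) n(2) Q(3) \<open>0 < measure _ _\<close>]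
    unfolding \<nu>_def n(1) by blast
  have mean_Q: "(\<integral>x. piter M N r K p0 t x * Qfun N r x \<partial>M) = (\<integral>e. exp e \<partial>N) * \<nu> t" for t
    by (simp add: Qfun_def \<nu>_def mult_ac)
  have "incseq \<nu>" "\<nu> \<longlonglongrightarrow> exp (r x0)"
    by (rule LIMSEQ_of_quadratic_gain[of \<nu>, OF d(2,3,1)])+
  then show ?thesis
    using Q(1) by (simp add: mean_Q Q(2) incseq_SucD tendsto_mult_left del: piter.simps)
qed

end
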